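(* Let $\Delta$ be a geodetic graph and $s$ a positive integer. If every isometrically embedded circuit in $\Delta$ has length at most $2s+1$, then $\Delta$ is $s$-broomlike.
   Context: Graphs are simple and undirected. A graph is geodetic if between any two vertices there is a unique shortest path (geodesic); $d$ denotes the path metric. A path $u_0,\dots,u_n$ is an embedded circuit of length $n$ if $u_0,\dots,u_{n-1}$ are distinct and $u_0=u_n$; it is isometrically embedded if $d(u_i,u_j)=\min\{j-i,n+i-j\}$ for all $0\le i<j<n$ (a path $u,v,u$ with $u,v$ adjacent counts as one of length two). A geodetic graph $\Delta$ is $s$-broomlike if whenever $a_0,\dots,a_{n-1},a_n,b$ is a path of distinct vertices such that $a_0,\dots,a_n$ is a geodesic but $a_0,\dots,a_n,b$ is not, then the geodesic from $a_0$ to $b$ is $a_0,\dots,a_{n-p},b_{n-p+1},\dots,b_n=b$ for some $p\le s$ with $b_{n-p+1}\neq a_{n-p+1}$. *)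

theory Defs
  imports Main
begin

text \<open>A simple undirected graph: vertex set V, symmetric irreflexive edge relation E on V.
Paths (walks) are nonempty vertex lists; a list of n+1 vertices has length n.\<close>

definition simple_graph :: "'a set \<Rightarrow> ('a \<Rightarrow> 'a \<Rightarrow> bool) \<Rightarrow> bool" where
  "simple_graph V E \<longleftrightarrow> (\<forall>u v. E u v \<longrightarrow> u \<in> V \<and> v \<in> V \<and> E v u \<and> u \<noteq> v)"

definition walk :: "'a set \<Rightarrow> ('a \<Rightarrow> 'a \<Rightarrow> bool) \<Rightarrow> 'a list \<Rightarrow> bool" where
  "walk V E xs \<longleftrightarrow> xs \<noteq> [] \<and> set xs \<subseteq> V \<and>
     (\<forall>i. i + 1 < length xs \<longrightarrow> E (xs ! i) (xs ! (i + 1)))"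

definition dist :: "'a set \<Rightarrow> ('a \<Rightarrow> 'a \<Rightarrow> bool) \<Rightarrow> 'a \<Rightarrow> 'a \<Rightarrow> nat" where
  "dist V E u v = (LEAST n. \<exists>xs. walk V E xs \<and> hd xs = u \<and> last xs = v \<and> length xs = n + 1)"

definition geodesic :: "'a set \<Rightarrow> ('a \<Rightarrow> 'a \<Rightarrow> bool) \<Rightarrow> 'a list \<Rightarrow> bool" where
  "geodesic V E xs \<longleftrightarrow> walk V E xs \<and> length xs = dist V E (hd xs) (last xs) + 1"

definition geodetic :: "'a set \<Rightarrow> ('a \<Rightarrow> 'a \<Rightarrow> bool) \<Rightarrow> bool" where
  "geodetic V E \<longleftrightarrow> simple_graph V E \<and>
     (\<forall>u\<in>V. \<forall>v\<in>V. \<exists>!xs. geodesic V E xs \<and> hd xs = u \<and> last xs = v)"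

definition embedded_circuit :: "'a set \<Rightarrow> ('a \<Rightarrow> 'a \<Rightarrow> bool) \<Rightarrow> 'a list \<Rightarrow> bool" where
  "embedded_circuit V E cs \<longleftrightarrow> walk V E cs \<and> distinct (butlast cs) \<and> last cs = hd cs"

definition isometric_circuit :: "'a set \<Rightarrow> ('a \<Rightarrow> 'a \<Rightarrow> bool) \<Rightarrow> 'a list \<Rightarrow> bool" where
  "isometric_circuit V E cs \<longleftrightarrow> embedded_circuit V E cs \<and>
     (let n = length cs - 1 in
       \<forall>i j. i < j \<and> j < n \<longrightarrow> dist V E (cs ! i) (cs ! j) = min (j - i) (n + i - j))"

text \<open>s-broomlike: a = [a_0..a_n] geodesic, a@[b] a path of distinct vertices that is not a
geodesic; then the geodesic g from a_0 to b is a_0..a_{n-p}, b_{n-p+1}..b_n = b with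
1 \<le> p \<le> s and b_{n-p+1} \<noteq> a_{n-p+1}.\<close>
definition broomlike :: "nat \<Rightarrow> 'a set \<Rightarrow> ('a \<Rightarrow> 'a \<Rightarrow> bool) \<Rightarrow> bool" where
  "broomlike s V E \<longleftrightarrow>
     (\<forall>a b. walk V E (a @ [b]) \<and> distinct (a @ [b]) \<and> a \<noteq> [] \<and> geodesic V E a \<and>
        \<not> geodesic V E (a @ [b]) \<longrightarrow>
        (\<forall>g. geodesic V E g \<and> hd g = hd a \<and> last g = b \<longrightarrow>
          (let n = length a - 1 in
            \<exists>p. 0 < p \<and> p \<le> s \<and> p \<le> n \<and> length g = n + 1 \<and>
                take (n - p + 1) g = take (n - p + 1) a \<and>
                g ! (n - p + 1) \<noteq> a ! (n - p + 1))))"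

end

theory Submission
  imports Defs
begin

text \<open>Let \<open>a\<^sub>0 \<dots> a\<^sub>n b\<close> be as in the definition of s-broomlike and \<open>g\<close> the geodesic from
  \<open>a\<^sub>0\<close> to \<open>b\<close>. Then \<open>d(a\<^sub>0, b) = n\<close>: it is at most \<open>n\<close> because \<open>a\<^sub>0 \<dots> a\<^sub>n b\<close> is not a
  geodesic, and \<open>d(a\<^sub>0, b) = n - 1\<close> would put \<open>b\<close> on the unique geodesic from \<open>a\<^sub>0\<close> to \<open>a\<^sub>n\<close>,
  i.e. \<open>b = a\<^sub>n\<^sub>-\<^sub>1\<close>. So \<open>g\<close> also has \<open>n + 1\<close> vertices; let \<open>a\<^sub>n\<^sub>-\<^sub>p\<close> be the last vertex where
  it agrees with \<open>a\<close>. The branches from \<open>a\<^sub>n\<^sub>-\<^sub>p\<close> to \<open>a\<^sub>n\<close> and to \<open>b\<close>, closed by the edge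
  \<open>a\<^sub>n b\<close>, form a closed walk of odd length \<open>2p + 1\<close>, and in a geodetic graph such a walk is an
  isometric circuit: if the two arcs of length \<open>p\<close> leaving one of its vertices are geodesics and
  the walk does not turn back there, the same holds at the next vertex, since otherwise two
  distinct vertices would lie at the same distance from one end of a geodesic. Hence
  \<open>2p + 1 \<le> 2s + 1\<close>.\<close>

lemma simple_graph_edgeD:
  assumes "simple_graph V E" "E u v"
  shows "u \<in> V" "v \<in> V" "E v u"
  using assms unfolding simple_graph_def by blast+

lemma walk_iff_successively:
  "walk V E xs \<longleftrightarrow> xs \<noteq> [] \<and> set xs \<subseteq> V \<and> successively E xs"
  unfolding walk_def successively_conv_nth by simp

lemma walk_edge: "walk V E xs \<Longrightarrow> Suc i < length xs \<Longrightarrow> E (xs ! i) (xs ! Suc i)"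
  unfolding walk_def by simp

lemma walk_vertex: "walk V E xs \<Longrightarrow> i < length xs \<Longrightarrow> xs ! i \<in> V"
  unfolding walk_def by auto

lemma walk_append_edge:
  "walk V E xs \<Longrightarrow> walk V E ys \<Longrightarrow> E (last xs) (hd ys) \<Longrightarrow> walk V E (xs @ ys)"
  by (auto simp: walk_iff_successively successively_append_iff)

lemma walk_append_shared:
  "walk V E xs \<Longrightarrow> walk V E ys \<Longrightarrow> last xs = hd ys \<Longrightarrow> walk V E (xs @ tl ys)"
  by (cases ys) (auto simp: walk_iff_successively successively_append_iff successively_Cons)

lemma walk_rev: "simple_graph V E \<Longrightarrow> walk V E xs \<Longrightarrow> walk V E (rev xs)"
  by (auto simp: walk_iff_successively elim!: successively_mono dest: simple_graph_edgeD)

lemma walk_drop: "walk V E xs \<Longrightarrow> i < length xs \<Longrightarrow> walk V E (drop i xs)"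
  unfolding walk_iff_successively
  by (metis append_take_drop_id drop_eq_Nil2 leD set_drop_subset subset_trans successively_append_iff)

lemma walk_take: "walk V E xs \<Longrightarrow> 0 < t \<Longrightarrow> walk V E (take t xs)"
  unfolding walk_iff_successively
  by (metis append_take_drop_id set_take_subset subset_trans successively_append_iff take_eq_Nil neq0_conv)

lemma last_append_tl: "last xs = hd ys \<Longrightarrow> ys \<noteq> [] \<Longrightarrow> last (xs @ tl ys) = last ys"
  by (cases ys) auto

lemma dist_le_length:
  assumes "walk V E xs" "hd xs = u" "last xs = v"
  shows "dist V E u v \<le> length xs - 1"
  unfolding dist_def using assms by (intro Least_le) (auto simp: walk_def)

lemma dist_self: "u \<in> V \<Longrightarrow> dist V E u u = 0"
  using dist_le_length[of V E "[u]"] by (simp add: walk_def)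

lemma dist_edge_le: "simple_graph V E \<Longrightarrow> E u v \<Longrightarrow> dist V E u v \<le> 1"
  using dist_le_length[of V E "[u, v]"] by (auto simp: walk_def nth_Cons' dest: simple_graph_edgeD)

lemma dist_sym:
  assumes "simple_graph V E"
  shows "dist V E u v = dist V E v u"
proof -
  have rev_walk: "\<exists>ys. walk V E ys \<and> hd ys = v \<and> last ys = u \<and> length ys = n + 1"
    if "walk V E xs" "hd xs = u" "last xs = v" "length xs = n + 1" for xs u v n
    using that walk_rev[OF assms] by (intro exI[of _ "rev xs"]) (auto simp: hd_rev last_rev)
  have "(\<lambda>n. \<exists>xs. walk V E xs \<and> hd xs = u \<and> last xs = v \<and> length xs = n + 1) =
        (\<lambda>n. \<exists>xs. walk V E xs \<and> hd xs = v \<and> last xs = u \<and> length xs = n + 1)"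
    by (intro ext iffI) (elim exE conjE, rule rev_walk; assumption)+
  then show ?thesis
    unfolding dist_def by (rule arg_cong)
qed

lemma geodesic_walk: "geodesic V E xs \<Longrightarrow> walk V E xs"
  unfolding geodesic_def by blast

lemma geodetic_simple_graph: "geodetic V E \<Longrightarrow> simple_graph V E"
  unfolding geodetic_def by blast

lemma geodetic_obtain_shortest_walk:
  assumes "geodetic V E" "u \<in> V" "v \<in> V"
  obtains xs where "walk V E xs" "hd xs = u" "last xs = v" "length xs = dist V E u v + 1"
  using assms unfolding geodetic_def geodesic_def by metis

lemma geodetic_geodesic_unique:
  assumes "geodetic V E" "geodesic V E xs" "geodesic V E ys" "hd xs = hd ys" "last xs = last ys"
  shows "xs = ys"
proof -
  have "hd xs \<in> V" "last xs \<in> V"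
    using assms(2) unfolding geodesic_def walk_def by auto
  then show ?thesis
    using assms unfolding geodetic_def by metis
qed

lemma dist_triangle:
  assumes G: "geodetic V E" and in_V: "u \<in> V" "v \<in> V" "w \<in> V"
  shows "dist V E u w \<le> dist V E u v + dist V E v w"
proof -
  obtain xs where xs: "walk V E xs" "hd xs = u" "last xs = v" "length xs = dist V E u v + 1"
    using geodetic_obtain_shortest_walk[OF G in_V(1,2)] .
  obtain ys where ys: "walk V E ys" "hd ys = v" "last ys = w" "length ys = dist V E v w + 1"
    using geodetic_obtain_shortest_walk[OF G in_V(2,3)] .
  have "walk V E (xs @ tl ys)"
    using walk_append_shared[OF xs(1) ys(1)] xs(3) ys(2) by simp
  moreover have "hd (xs @ tl ys) = u" "last (xs @ tl ys) = w"
    using xs ys by (auto simp: walk_def last_append_tl)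
  ultimately have "dist V E u w \<le> length (xs @ tl ys) - 1"
    by (rule dist_le_length)
  then show ?thesis
    using xs ys by (simp add: walk_def)
qed

lemma geodesic_through:
  assumes G: "geodetic V E" and in_V: "u \<in> V" "x \<in> V" "v \<in> V"
    and on: "dist V E u v = dist V E u x + dist V E x v"
  obtains zs where "geodesic V E zs" "hd zs = u" "last zs = v" "zs ! dist V E u x = x"
proof -
  obtain xs where xs: "walk V E xs" "hd xs = u" "last xs = x" "length xs = dist V E u x + 1"
    using geodetic_obtain_shortest_walk[OF G in_V(1,2)] .
  obtain ys where ys: "walk V E ys" "hd ys = x" "last ys = v" "length ys = dist V E x v + 1"
    using geodetic_obtain_shortest_walk[OF G in_V(2,3)] .
  have walk: "walk V E (xs @ tl ys)"
    using walk_append_shared[OF xs(1) ys(1)] xs(3) ys(2) by simp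
  have ends: "hd (xs @ tl ys) = u" "last (xs @ tl ys) = v"
    using xs ys by (auto simp: walk_def last_append_tl)
  have "geodesic V E (xs @ tl ys)"
    unfolding geodesic_def using walk ends xs(4) ys(4) on by simp
  moreover have "(xs @ tl ys) ! dist V E u x = x"
    using xs by (simp add: nth_append last_conv_nth walk_def flip: xs(4))
  ultimately show ?thesis
    using that ends by blast
qed

lemma geodetic_between_unique:
  assumes G: "geodetic V E" and in_V: "u \<in> V" "v \<in> V" "x \<in> V" "y \<in> V"
    and x: "dist V E u x \<le> t" "dist V E x v + t \<le> dist V E u v"
    and y: "dist V E u y \<le> t" "dist V E y v + t \<le> dist V E u v"
  shows "x = y"
proof -
  have x_on: "dist V E u x = t" "dist V E u v = dist V E u x + dist V E x v"
    using dist_triangle[OF G in_V(1,3,2)] x by auto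
  have y_on: "dist V E u y = t" "dist V E u v = dist V E u y + dist V E y v"
    using dist_triangle[OF G in_V(1,4,2)] y by auto
  obtain zs where zs: "geodesic V E zs" "hd zs = u" "last zs = v" "zs ! t = x"
    using geodesic_through[OF G in_V(1,3,2) x_on(2)] x_on(1) by metis
  obtain zs' where zs': "geodesic V E zs'" "hd zs' = u" "last zs' = v" "zs' ! t = y"
    using geodesic_through[OF G in_V(1,4,2) y_on(2)] y_on(1) by metis
  have "zs = zs'"
    using geodetic_geodesic_unique[OF G zs(1) zs'(1)] zs zs' by simp
  then show ?thesis
    using zs(4) zs'(4) by simp
qed

lemma walk_dist_nth_le:
  assumes W: "walk V E xs" and "i + t < length xs"
  shows "dist V E (xs ! i) (xs ! (i + t)) \<le> t"
proof -
  let ?ys = "take (t + 1) (drop i xs)"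
  have "walk V E ?ys"
    using assms by (simp add: walk_take walk_drop)
  moreover have "hd ?ys = xs ! i" "last ?ys = xs ! (i + t)"
    using assms by (simp_all add: hd_drop_conv_nth last_conv_nth)
  ultimately show ?thesis
    using dist_le_length assms by fastforce
qed

lemma geodesic_dist_nth:
  assumes G: "geodetic V E" and g: "geodesic V E xs" and "i \<le> j" "j < length xs"
  shows "dist V E (xs ! i) (xs ! j) = j - i"
proof -
  let ?l = "length xs - 1"
  have W: "walk V E xs" and xs_ne: "xs \<noteq> []"
    using g by (auto simp: geodesic_def walk_def)
  have in_V: "xs ! k \<in> V" if "k < length xs" for k
    using walk_vertex[OF W that] .
  have "length xs = dist V E (xs ! 0) (xs ! ?l) + 1"
    using g xs_ne by (simp add: geodesic_def hd_conv_nth last_conv_nth)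
  then have "?l = dist V E (xs ! 0) (xs ! ?l)"
    by linarith
  also have "\<dots> \<le> dist V E (xs ! 0) (xs ! i) + dist V E (xs ! i) (xs ! j) + dist V E (xs ! j) (xs ! ?l)"
    using dist_triangle[OF G in_V in_V in_V, of 0 i ?l] dist_triangle[OF G in_V in_V in_V, of i j ?l]
      assms by fastforce
  also have "\<dots> \<le> i + dist V E (xs ! i) (xs ! j) + (?l - j)"
    using walk_dist_nth_le[OF W, of 0 i] walk_dist_nth_le[OF W, of j "?l - j"] assms xs_ne by simp
  finally show ?thesis
    using walk_dist_nth_le[OF W, of i "j - i"] assms by simp
qed

lemma geodesic_drop:
  assumes G: "geodetic V E" and g: "geodesic V E xs" and i: "i < length xs"
  shows "geodesic V E (drop i xs)"
proof -
  have W: "walk V E xs"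
    using g by (rule geodesic_walk)
  have "dist V E (xs ! i) (xs ! (length xs - 1)) = length xs - 1 - i"
    using geodesic_dist_nth[OF G g] i by simp
  then show ?thesis
    unfolding geodesic_def using walk_drop[OF W i] i
    by (simp add: hd_drop_conv_nth last_conv_nth)
qed

locale geodetic_odd_cycle =
  fixes V :: "'a set" and E :: "'a \<Rightarrow> 'a \<Rightarrow> bool" and w :: "nat \<Rightarrow> 'a" and p :: nat
  assumes geodetic: "geodetic V E"
    and p_pos: "0 < p"
    and edge: "E (w k) (w (Suc k))"
    and periodic: "w (k + (2 * p + 1)) = w k"
begin

abbreviation \<delta> :: "nat \<Rightarrow> nat \<Rightarrow> nat" where
  "\<delta> i j \<equiv> dist V E (w i) (w j)"

lemma w_in_V: "w k \<in> V"
  using simple_graph_edgeD(1)[OF geodetic_simple_graph[OF geodetic] edge] .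

lemma \<delta>_sym: "\<delta> i j = \<delta> j i"
  using dist_sym[OF geodetic_simple_graph[OF geodetic]] .

lemma \<delta>_triangle: "\<delta> i j \<le> \<delta> i k + \<delta> k j"
  using dist_triangle[OF geodetic w_in_V w_in_V w_in_V] .

lemma \<delta>_self: "\<delta> i i = 0"
  using dist_self[OF w_in_V] .

lemma \<delta>_le_steps: "\<delta> i (i + t) \<le> t"
proof (induction t)
  case 0
  show ?case by (simp add: \<delta>_self)
next
  case (Suc t)
  have "\<delta> (i + t) (i + Suc t) \<le> 1"
    using dist_edge_le[OF geodetic_simple_graph[OF geodetic] edge] by simp
  then show ?case
    using \<delta>_triangle[of i "i + Suc t" "i + t"] Suc by simp
qed

lemma \<delta>_between_unique:
  "\<delta> u x \<le> t \<Longrightarrow> \<delta> x v + t \<le> \<delta> u v \<Longrightarrow> \<delta> u y \<le> t \<Longrightarrow> \<delta> y v + t \<le> \<delta> u v \<Longrightarrow> w x = w y"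
  using geodetic_between_unique[OF geodetic w_in_V w_in_V w_in_V w_in_V] .

text \<open>\<open>w (k + (2 * p + 1) - i)\<close> is the vertex \<open>i\<close> steps before \<open>w k\<close>; adding the period
  avoids truncated subtraction.\<close>

definition arcs_geodesic_at :: "nat \<Rightarrow> bool" where
  "arcs_geodesic_at k \<longleftrightarrow>
     (\<forall>i\<le>p. \<delta> k (k + i) = i) \<and> (\<forall>i\<le>p. \<delta> k (k + (2 * p + 1) - i) = i) \<and>
     w (Suc k) \<noteq> w (k + 2 * p)"

lemma arcs_geodesic_atD:
  assumes "arcs_geodesic_at k" "i \<le> p"
  shows "\<delta> k (k + i) = i" "\<delta> k (k + (2 * p + 1) - i) = i"
  using assms unfolding arcs_geodesic_at_def by auto

lemma forward_arc_Suc: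
  assumes arcs: "arcs_geodesic_at k" and i: "i \<le> p"
  shows "\<delta> (Suc k) (Suc k + i) = i"
proof -
  note fwd = arcs_geodesic_atD(1)[OF arcs] and bwd = arcs_geodesic_atD(2)[OF arcs]
  have fork: "w (Suc k) \<noteq> w (k + 2 * p)"
    using arcs unfolding arcs_geodesic_at_def by blast
  have step: "\<delta> k (Suc k) = 1"
    using fwd[of 1] p_pos by simp
  have "i \<le> \<delta> (Suc k) (Suc k + i)"
  proof (cases "i < p")
    case True
    have "Suc i = \<delta> k (Suc k + i)"
      using fwd[of "Suc i"] True by simp
    also have "\<dots> \<le> 1 + \<delta> (Suc k) (Suc k + i)"
      using \<delta>_triangle[of k "Suc k + i" "Suc k"] step by simp
    finally show ?thesis by simp
  next
    case False
    with i have "i = p" by simp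
    have "k + (2 * p + 1) - p = Suc k + p"
      by simp
    then have far: "\<delta> k (Suc k + p) = p"
      using bwd[of p] by (simp only: order_refl)
    have closing: "\<delta> k (k + 2 * p) = 1"
      using bwd[of 1] p_pos by simp
    have "Suc k + p + (p - 1) = k + 2 * p"
      using p_pos by simp
    then have "\<delta> (k + 2 * p) (Suc k + p) \<le> p - 1"
      using \<delta>_le_steps[of "Suc k + p" "p - 1"] \<delta>_sym by metis
    then have "\<not> \<delta> (Suc k) (Suc k + p) < p"
      using \<delta>_between_unique[of k "Suc k" 1 "Suc k + p" "k + 2 * p"] step closing far fork p_pos
      by fastforce
    then show ?thesis
      using \<open>i = p\<close> by simp
  qed
  then show ?thesis
    using \<delta>_le_steps[of "Suc k" i] by simp
qed

lemma backward_arc_Suc: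
  assumes arcs: "arcs_geodesic_at k" and i: "i \<le> p"
  shows "\<delta> (Suc k) (Suc k + (2 * p + 1) - i) = i"
proof (cases i)
  case 0
  then show ?thesis
    using periodic[of "Suc k"] by (simp add: \<delta>_self)
next
  case (Suc j)
  note fwd = arcs_geodesic_atD(1)[OF arcs] and bwd = arcs_geodesic_atD(2)[OF arcs]
  define z where "z = k + (2 * p + 1) - j"
  have z: "Suc k + (2 * p + 1) - i = z" "z + i = Suc k + (2 * p + 1)"
    using Suc i unfolding z_def by simp_all
  have "\<delta> z (Suc k) \<le> i"
    using \<delta>_le_steps[of z i] periodic[of "Suc k"] z(2) by simp
  then have upper: "\<delta> (Suc k) z \<le> i"
    using \<delta>_sym by metis
  have "\<not> \<delta> (Suc k) z \<le> j"
  proof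
    assume near: "\<delta> (Suc k) z \<le> j"
    let ?v = "Suc k + p"
    have "\<delta> (Suc k) ?v = p"
      using forward_arc_Suc[OF arcs] by simp
    moreover have idx: "?v + (p - j) = z" "Suc k + j + (p - j) = ?v"
      using Suc i by (simp_all add: z_def)
    ultimately have "w z = w (Suc k + j)"
      using \<delta>_between_unique[of "Suc k" z j ?v "Suc k + j"] near Suc i
        \<delta>_le_steps[of ?v "p - j", unfolded idx(1)] \<delta>_le_steps[of "Suc k" j]
        \<delta>_le_steps[of "Suc k + j" "p - j", unfolded idx(2)] \<delta>_sym[of ?v z] by fastforce
    moreover have "\<delta> k z = j" "\<delta> k (Suc k + j) = Suc j"
      using bwd[of j] fwd[of "Suc j"] Suc i by (simp_all add: z_def)
    ultimately show False
      by simp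
  qed
  then show ?thesis
    using upper z(1) Suc by simp
qed

lemma no_backtrack_Suc:
  assumes arcs: "arcs_geodesic_at k"
  shows "w (Suc (Suc k)) \<noteq> w (Suc k + 2 * p)"
proof
  assume "w (Suc (Suc k)) = w (Suc k + 2 * p)"
  also have "\<dots> = w k"
    using periodic[of k] by simp
  finally have "\<delta> k (Suc (Suc k)) = 0"
    by (simp add: \<delta>_self)
  moreover have "\<delta> k (k + 2) = 2" if "2 \<le> p"
    using arcs_geodesic_atD(1)[OF arcs that] .
  moreover have "\<delta> k (k + (2 * p + 1) - 1) = 1"
    using arcs_geodesic_atD(2)[OF arcs, of 1] p_pos by simp
  ultimately show False
    using p_pos by (cases "p = 1") auto
qed

lemma arcs_geodesic_at_Suc: "arcs_geodesic_at k \<Longrightarrow> arcs_geodesic_at (Suc k)"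
  using forward_arc_Suc backward_arc_Suc no_backtrack_Suc
  unfolding arcs_geodesic_at_def[of "Suc k"] by simp

lemma \<delta>_cyclic:
  assumes "arcs_geodesic_at 0" "i < j" "j < 2 * p + 1"
  shows "\<delta> i j = min (j - i) (2 * p + 1 + i - j)"
proof -
  have "arcs_geodesic_at i"
    by (induction i) (use assms(1) arcs_geodesic_at_Suc in auto)
  note fwd = arcs_geodesic_atD(1)[OF this] and bwd = arcs_geodesic_atD(2)[OF this]
  show ?thesis
  proof (cases "j - i \<le> p")
    case True
    then show ?thesis
      using fwd[of "j - i"] assms by simp
  next
    case False
    then show ?thesis
      using bwd[of "2 * p + 1 + i - j"] assms by simp
  qed
qed

end

lemma isometric_circuitI:
  assumes W: "walk V E cs" and closed: "last cs = hd cs" and len: "length cs = n + 1"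
    and d: "\<And>i j. i < j \<Longrightarrow> j < n \<Longrightarrow> dist V E (cs ! i) (cs ! j) = min (j - i) (n + i - j)"
  shows "isometric_circuit V E cs"
proof -
  have "cs ! i \<noteq> cs ! j" if "i < j" "j < n" for i j
  proof
    assume "cs ! i = cs ! j"
    moreover have "cs ! j \<in> V"
      using walk_vertex[OF W] that len by simp
    ultimately have "dist V E (cs ! i) (cs ! j) = 0"
      by (simp add: dist_self)
    then show False
      using d[OF that] that by simp
  qed
  then have "distinct (butlast cs)"
    unfolding distinct_conv_nth using len
    by (metis length_butlast nth_butlast nat_neq_iff add_diff_cancel_right')
  then show ?thesis
    unfolding isometric_circuit_def embedded_circuit_def Let_def using W closed d len by simp
qed

lemma closed_walk_nth_mod:
  assumes "last cs = hd cs" "length cs = L + 1" "k \<le> L"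
  shows "cs ! (k mod L) = cs ! k"
proof (cases "k = L")
  case True
  then show ?thesis
    using assms hd_conv_nth[of cs] last_conv_nth[of cs] by force
qed (use assms in simp)

lemma closed_walk_edge_mod:
  assumes W: "walk V E cs" and closed: "last cs = hd cs" and len: "length cs = L + 1" and "0 < L"
  shows "E (cs ! (k mod L)) (cs ! (Suc k mod L))"
proof (cases "Suc (k mod L) < L")
  case True
  then have "Suc k mod L = Suc (k mod L)"
    by (simp add: mod_Suc)
  then show ?thesis
    using walk_edge[OF W] True len by simp
next
  case False
  with \<open>0 < L\<close> have wrap: "Suc (k mod L) = L"
    using mod_less_divisor[of L k] by linarith
  then have "Suc k mod L = L mod L"
    by (simp add: mod_Suc)
  then show ?thesis
    using walk_edge[OF W, of "k mod L"] closed_walk_nth_mod[OF closed len, of L] len wrap by simp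
qed

lemma odd_closed_walk_isometric_circuit:
  assumes G: "geodetic V E" and p: "0 < p"
    and W: "walk V E cs" and closed: "last cs = hd cs" and len: "length cs = 2 * p + 2"
    and fwd: "\<And>i. i \<le> p \<Longrightarrow> dist V E (cs ! 0) (cs ! i) = i"
    and bwd: "\<And>i. i \<le> p \<Longrightarrow> dist V E (cs ! 0) (cs ! (2 * p + 1 - i)) = i"
    and fork: "cs ! 1 \<noteq> cs ! (2 * p)"
  shows "isometric_circuit V E cs"
proof -
  let ?L = "2 * p + 1"
  have len': "length cs = ?L + 1"
    using len by simp
  define w where "w k = cs ! (k mod ?L)" for k
  interpret geodetic_odd_cycle V E w p
  proof
    show "geodetic V E" "0 < p"
      using G p .
    show "E (w k) (w (Suc k))" for k
      unfolding w_def using closed_walk_edge_mod[OF W closed len'] by simp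
    show "w (k + ?L) = w k" for k
      unfolding w_def by (simp only: mod_add_self2)
  qed
  have w_cs: "w i = cs ! i" if "i \<le> ?L" for i
    unfolding w_def using closed_walk_nth_mod[OF closed len' that] .
  have "arcs_geodesic_at 0"
    unfolding arcs_geodesic_at_def using fwd bwd fork w_cs p by simp
  then have "dist V E (cs ! i) (cs ! j) = min (j - i) (?L + i - j)" if "i < j" "j < ?L" for i j
    using \<delta>_cyclic[of i j] w_cs that by simp
  then show ?thesis
    using isometric_circuitI[OF W closed len'] by blast
qed

lemma forked_geodesics_isometric_circuit:
  assumes G: "geodetic V E" and p: "0 < p"
    and xs: "geodesic V E xs" "length xs = p + 1"
    and ys: "geodesic V E ys" "length ys = p + 1"
    and fork: "hd xs = hd ys" "xs ! 1 \<noteq> ys ! 1"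
    and join: "E (last xs) (last ys)"
  shows "isometric_circuit V E (xs @ rev ys)"
proof -
  have ne: "xs \<noteq> []" "ys \<noteq> []"
    using xs(2) ys(2) by auto
  have cs_xs: "(xs @ rev ys) ! i = xs ! i" if "i \<le> p" for i
    using that xs(2) by (simp add: nth_append)
  have cs_ys: "(xs @ rev ys) ! (2 * p + 1 - i) = ys ! i" if "i \<le> p" for i
    using that xs(2) ys(2) by (auto simp: nth_append rev_nth)
  have hd_ys: "xs ! 0 = ys ! 0"
    using fork(1) ne by (simp add: hd_conv_nth)
  show ?thesis
  proof (rule odd_closed_walk_isometric_circuit[OF G p])
    show "walk V E (xs @ rev ys)"
      using walk_append_edge[OF geodesic_walk[OF xs(1)]
          walk_rev[OF geodetic_simple_graph[OF G] geodesic_walk[OF ys(1)]]] join ne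
      by (simp add: hd_rev)
    show "last (xs @ rev ys) = hd (xs @ rev ys)"
      using fork(1) ne by (simp add: last_rev)
    show "length (xs @ rev ys) = 2 * p + 2"
      using xs(2) ys(2) by simp
    show "dist V E ((xs @ rev ys) ! 0) ((xs @ rev ys) ! i) = i" if "i \<le> p" for i
      using geodesic_dist_nth[OF G xs(1), of 0 i] cs_xs[of 0] cs_xs[of i] that xs(2) by simp
    show "dist V E ((xs @ rev ys) ! 0) ((xs @ rev ys) ! (2 * p + 1 - i)) = i" if "i \<le> p" for i
      using geodesic_dist_nth[OF G ys(1), of 0 i] cs_xs[of 0] cs_ys[of i] hd_ys that ys(2)
      by simp
    show "(xs @ rev ys) ! 1 \<noteq> (xs @ rev ys) ! (2 * p)"
      using cs_xs[of 1] cs_ys[of 1] fork(2) p by simp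
  qed
qed

lemma diverging_geodesics_isometric_circuit:
  assumes G: "geodetic V E" and a: "geodesic V E a" and g: "geodesic V E g"
    and len: "length g = length a" and m: "0 < m" "m < length a"
    and common: "take m g = take m a" and diverge: "g ! m \<noteq> a ! m"
    and join: "E (last a) (last g)"
  obtains cs where "isometric_circuit V E cs" "length cs - 1 = 2 * (length a - m) + 1"
proof -
  define xs ys where "xs = drop (m - 1) a" and "ys = drop (m - 1) g"
  have "isometric_circuit V E (xs @ rev ys)"
  proof (rule forked_geodesics_isometric_circuit[OF G, where p = "length a - m"])
    show "0 < length a - m"
      using m by simp
    show "geodesic V E xs" "geodesic V E ys"
      unfolding xs_def ys_def using geodesic_drop[OF G] a g m len by simp_all
    show "length xs = length a - m + 1" "length ys = length a - m + 1"
      unfolding xs_def ys_def using m len by simp_all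
    have "g ! (m - 1) = a ! (m - 1)"
      using nth_take[of "m - 1" m] common m by (metis diff_less zero_less_one)
    then show "hd xs = hd ys"
      unfolding xs_def ys_def using m len by (simp add: hd_drop_conv_nth)
    show "xs ! 1 \<noteq> ys ! 1"
      unfolding xs_def ys_def using diverge m len by simp
    show "E (last xs) (last ys)"
      unfolding xs_def ys_def using join m len by simp
  qed
  moreover have "length (xs @ rev ys) - 1 = 2 * (length a - m) + 1"
    unfolding xs_def ys_def using m len by simp
  ultimately show ?thesis
    using that by blast
qed

lemma dist_hd_non_geodesic_snoc:
  assumes G: "geodetic V E" and a: "geodesic V E a"
    and ab: "walk V E (a @ [b])" "b \<notin> set a" "\<not> geodesic V E (a @ [b])"
  shows "dist V E (hd a) b = length a - 1"
proof -
  define n where "n = length a - 1"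
  have SG: "simple_graph V E"
    using geodetic_simple_graph[OF G] .
  have Wa: "walk V E a"
    using geodesic_walk[OF a] .
  have a_ne: "a \<noteq> []" and len: "length a = n + 1"
    using Wa unfolding walk_def n_def by auto
  have ends: "hd a = a ! 0" "last a = a ! n"
    using a_ne len by (simp_all add: hd_conv_nth last_conv_nth)
  have edge: "E (a ! n) b"
    using ab(1) a_ne ends by (simp add: walk_iff_successively successively_append_iff)
  have in_V: "a ! k \<in> V" if "k \<le> n" for k
    using walk_vertex[OF Wa] that len by simp
  have bV: "b \<in> V"
    using simple_graph_edgeD(2)[OF SG edge] .
  have "dist V E (hd a) b \<le> n + 1"
    using dist_le_length[OF ab(1)] a_ne len by simp
  moreover have "dist V E (hd a) b \<noteq> n + 1"
    using ab(1,3) a_ne len unfolding geodesic_def by simp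
  moreover have "\<not> dist V E (hd a) b < n"
  proof
    assume "dist V E (hd a) b < n"
    then have short: "dist V E (a ! 0) b < n"
      using ends(1) by simp
    have "dist V E b (a ! n) \<le> 1"
      using dist_edge_le[OF SG edge] dist_sym[OF SG] by metis
    moreover have "dist V E (a ! 0) (a ! n) = n" "dist V E (a ! 0) (a ! (n - 1)) = n - 1"
      "dist V E (a ! (n - 1)) (a ! n) = 1"
      using geodesic_dist_nth[OF G a] len short by auto
    ultimately have "b = a ! (n - 1)"
      using geodetic_between_unique[OF G in_V[of 0] in_V[of n] bV in_V[of "n - 1"], of "n - 1"] short
      by simp
    then show False
      using ab(2) len by simp
  qed
  ultimately show ?thesis
    using n_def by linarith
qed

lemma obtain_first_difference:
  assumes len: "length xs = length ys" and hd: "hd xs = hd ys" and last: "last xs \<noteq> last ys"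
  obtains m where "0 < m" "m < length xs" "take m xs = take m ys" "xs ! m \<noteq> ys ! m"
proof -
  define m where "m = (LEAST k. xs ! k \<noteq> ys ! k)"
  have ne: "xs \<noteq> []" "ys \<noteq> []"
    using len last by auto
  then have "xs ! (length xs - 1) \<noteq> ys ! (length xs - 1)"
    using len last by (simp add: last_conv_nth)
  then have diff: "xs ! m \<noteq> ys ! m" and "m \<le> length xs - 1"
    unfolding m_def by (fact LeastI, fact Least_le)
  then have "m < length xs"
    using ne by (simp flip: length_greater_0_conv)
  moreover have "take m xs = take m ys"
    using \<open>m < length xs\<close> len by (intro nth_equalityI) (auto simp: m_def dest: not_less_Least)
  moreover have "0 < m"
    using diff hd ne by (cases m) (auto simp: hd_conv_nth)
  ultimately show ?thesis
    using that diff by blast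
qed

lemma broomlikeI:
  assumes "\<And>a b g. walk V E (a @ [b]) \<Longrightarrow> distinct (a @ [b]) \<Longrightarrow> a \<noteq> [] \<Longrightarrow> geodesic V E a \<Longrightarrow>
      \<not> geodesic V E (a @ [b]) \<Longrightarrow> geodesic V E g \<Longrightarrow> hd g = hd a \<Longrightarrow> last g = b \<Longrightarrow>
      \<exists>m. 0 < m \<and> m < length a \<and> length a - m \<le> s \<and> length g = length a \<and>
        take m g = take m a \<and> g ! m \<noteq> a ! m"
  shows "broomlike s V E"
  unfolding broomlike_def Let_def
proof (intro allI impI)
  fix a b g
  assume "walk V E (a @ [b]) \<and> distinct (a @ [b]) \<and> a \<noteq> [] \<and> geodesic V E a \<and>
      \<not> geodesic V E (a @ [b])" "geodesic V E g \<and> hd g = hd a \<and> last g = b"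
  then obtain m where "0 < m" "m < length a" "length a - m \<le> s" "length g = length a"
    "take m g = take m a" "g ! m \<noteq> a ! m"
    using assms[of a b g] by blast
  then show "\<exists>p>0. p \<le> s \<and> p \<le> length a - 1 \<and> length g = length a - 1 + 1 \<and>
      take (length a - 1 - p + 1) g = take (length a - 1 - p + 1) a \<and>
      g ! (length a - 1 - p + 1) \<noteq> a ! (length a - 1 - p + 1)"
    by (intro exI[of _ "length a - m"]) auto
qed

theorem lemma5:
  fixes V :: "'a set" and E :: "'a \<Rightarrow> 'a \<Rightarrow> bool" and s :: nat
  assumes "geodetic V E"
    and "0 < s"
    and "\<forall>cs. isometric_circuit V E cs \<longrightarrow> length cs - 1 \<le> 2 * s + 1"
  shows "broomlike s V E"
proof (rule broomlikeI)
  fix a b g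
  assume ab: "walk V E (a @ [b])" "distinct (a @ [b])" "a \<noteq> []" "geodesic V E a"
      "\<not> geodesic V E (a @ [b])"
    and g: "geodesic V E g" "hd g = hd a" "last g = b"
  have "dist V E (hd a) b = length a - 1"
    using dist_hd_non_geodesic_snoc[OF assms(1) ab(4,1) _ ab(5)] ab(2) by simp
  then have len: "length g = length a"
    using g ab(3) unfolding geodesic_def by simp
  have "last a \<in> set a" "b \<notin> set a"
    using ab(2,3) by simp_all
  then obtain m where m: "0 < m" "m < length a" "take m g = take m a" "g ! m \<noteq> a ! m"
    using obtain_first_difference[of g a] len g(2,3) by metis
  have join: "E (last a) (last g)"
    using ab(1,3) g(3) by (simp add: walk_iff_successively successively_append_iff)
  obtain cs where "isometric_circuit V E cs" "length cs - 1 = 2 * (length a - m) + 1"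
    using diverging_geodesics_isometric_circuit[OF assms(1) ab(4) g(1) len m join] .
  with assms(3) have "length a - m \<le> s"
    by fastforce
  then show "\<exists>m. 0 < m \<and> m < length a \<and> length a - m \<le> s \<and> length g = length a \<and>
      take m g = take m a \<and> g ! m \<noteq> a ! m"
    using m len by blast
qed

end
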